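(* Let $B$ be a compact manifold with nonempty boundary $\partial B$, $c:\partial B\times[0,1)\hookrightarrow B$ an open collar of $\partial B$, and $\mathcal U=\{U_\alpha\}_{\alpha\in I}$ a finite open cover of $B$. Then there is $\epsilon\in(0,1]$ such that the subcollar $c|:\partial B\times[0,\epsilon)\hookrightarrow B$ is small with respect to $\mathcal U$.
   Context: A collar $c:\partial B\times[0,\epsilon)\hookrightarrow B$ is small with respect to $\mathcal U$ if (1) $U_\alpha\cap\big(B\setminus c(\partial B\times[0,\epsilon))\big)\ne\emptyset$ for every $\alpha\in I$, and (2) letting $I_\partial\subset I$ be the set of $\alpha$ with $U_\alpha\cap\partial B\neq\emptyset$, there exist open sets $W_\alpha\subset\partial B$, $\alpha\in I_\partial$, with $c(W_\alpha\times[0,\epsilon))\subset U_\alpha$ and $\{W_\alpha\}_{\alpha\in I_\partial}$ an open cover of $\partial B$. *)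

theory Defs
  imports "HOL-Analysis.Analysis"
begin

definition half_space :: "'m::euclidean_space itself \<Rightarrow> 'm set" where
  "half_space _ = {x. 0 \<le> x \<bullet> (SOME b. b \<in> (Basis::'m set))}"

definition bchart :: "'m::euclidean_space itself \<Rightarrow> 'a topology \<Rightarrow> 'a \<Rightarrow> 'a set \<Rightarrow> 'm set \<Rightarrow> ('a \<Rightarrow> 'm) \<Rightarrow> bool" where
  "bchart T X p U V \<phi> \<longleftrightarrow> openin X U \<and> p \<in> U \<and>
     openin (subtopology euclidean (half_space T)) V \<and>
     homeomorphic_map (subtopology X U) (subtopology euclidean V) \<phi>"

definition manifold_with_boundary :: "'m::euclidean_space itself \<Rightarrow> 'a topology \<Rightarrow> bool" where
  "manifold_with_boundary T X \<longleftrightarrow> Hausdorff_space X \<and> second_countable X \<and>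
     (\<forall>p\<in>topspace X. \<exists>U V (\<phi>::'a \<Rightarrow> 'm). bchart T X p U V \<phi>)"

definition mboundary :: "'m::euclidean_space itself \<Rightarrow> 'a topology \<Rightarrow> 'a set" where
  "mboundary T X = {p \<in> topspace X. \<exists>U V (\<phi>::'a \<Rightarrow> 'm). bchart T X p U V \<phi> \<and>
       \<phi> p \<bullet> (SOME b. b \<in> (Basis::'m set)) = 0}"

definition open_collar :: "'a topology \<Rightarrow> 'a set \<Rightarrow> ('a \<times> real \<Rightarrow> 'a) \<Rightarrow> bool" where
  "open_collar X D c \<longleftrightarrow>
     openin X (c ` (D \<times> {0..<1})) \<and>
     homeomorphic_map (prod_topology (subtopology X D) (subtopology euclideanreal {0..<1}))
        (subtopology X (c ` (D \<times> {0..<1}))) c \<and>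
     (\<forall>x\<in>D. c (x, 0) = x)"

definition small_collar :: "'a topology \<Rightarrow> 'a set \<Rightarrow> ('a \<times> real \<Rightarrow> 'a) \<Rightarrow> real \<Rightarrow> 'i set \<Rightarrow> ('i \<Rightarrow> 'a set) \<Rightarrow> bool" where
  "small_collar X D c \<epsilon> I U \<longleftrightarrow>
     (\<forall>a\<in>I. U a \<inter> (topspace X - c ` (D \<times> {0..<\<epsilon>})) \<noteq> {}) \<and>
     (\<exists>W. (\<forall>a\<in>{a\<in>I. U a \<inter> D \<noteq> {}}. openin (subtopology X D) (W a) \<and>
                 c ` (W a \<times> {0..<\<epsilon>}) \<subseteq> U a) \<and>
          (\<Union>a\<in>{a\<in>I. U a \<inter> D \<noteq> {}}. W a) = D)"

end

(* The manifold boundary is closed: a point that one chart sends into the open half-space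
   is sent there by every chart, since the transition map is a continuous injection between
   open subsets of euclidean space (invariance of domain). So the boundary is compact.
   Each boundary point x has a neighbourhood N and a height r with c(N x [0,r)) inside some
   U a (tube lemma); finitely many such N cover the boundary, and the least height works for
   all of them. Finally, a nonempty open U a either contains a point off the collar or a point
   c(x,s), which by injectivity of c is not in c(dB x [0,s)). *)
theory Submission
  imports Defs
begin

definition half_space_axis :: "'m::euclidean_space itself \<Rightarrow> 'm" where
  "half_space_axis _ = (SOME b. b \<in> Basis)"

lemma half_space_axis_in_Basis: "half_space_axis T \<in> Basis"
  unfolding half_space_axis_def by (rule someI_ex) (use nonempty_Basis in blast)

lemma half_space_eq: "half_space T = {x. 0 \<le> x \<bullet> half_space_axis T}"
  by (simp add: half_space_def half_space_axis_def)

lemma mboundary_eq: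
  "mboundary T X = {p \<in> topspace X. \<exists>U V (\<phi>::'a \<Rightarrow> 'm::euclidean_space).
     bchart T X p U V \<phi> \<and> \<phi> p \<bullet> half_space_axis T = 0}"
  by (simp add: mboundary_def half_space_axis_def)

lemma interior_half_space: "interior (half_space T) = {x. 0 < x \<bullet> half_space_axis T}"
  using interior_halfspace_ge[where a="half_space_axis T" and b=0] half_space_axis_in_Basis[of T]
  by (simp add: half_space_eq inner_commute nonzero_Basis)

lemma openin_half_space_open_iff:
  assumes "openin (top_of_set (half_space T)) S"
  shows "open S \<longleftrightarrow> (\<forall>x\<in>S. 0 < x \<bullet> half_space_axis T)"
proof
  assume "open S"
  then have "S \<subseteq> interior (half_space T)"
    using openin_subset[OF assms] by (simp add: interior_maximal)
  then show "\<forall>x\<in>S. 0 < x \<bullet> half_space_axis T"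
    by (auto simp: interior_half_space)
next
  assume pos: "\<forall>x\<in>S. 0 < x \<bullet> half_space_axis T"
  have "openin (top_of_set {x. 0 < x \<bullet> half_space_axis T}) S"
    by (rule openin_subset_trans[OF assms]) (use pos in \<open>auto simp: half_space_eq\<close>)
  then show "open S"
    using open_halfspace_gt[where a="half_space_axis T" and b=0] by (simp add: openin_open_eq inner_commute)
qed

lemma bchart_at: "bchart T X p U V \<phi> \<Longrightarrow> q \<in> U \<Longrightarrow> bchart T X q U V \<phi>"
  by (simp add: bchart_def)

lemma bchart_image:
  assumes "bchart T X p U V \<phi>"
  shows "\<phi> ` U = V"
proof -
  have "U \<subseteq> topspace X"
    using assms openin_subset unfolding bchart_def by blast
  then show ?thesis
    using assms homeomorphic_imp_surjective_map[of "subtopology X U" "top_of_set V" \<phi>]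
    by (simp add: bchart_def Int_absorb1)
qed

lemma bchart_nonneg:
  assumes "bchart T X p U V \<phi>" "x \<in> U"
  shows "0 \<le> \<phi> x \<bullet> half_space_axis T"
proof -
  have "V \<subseteq> half_space T"
    using assms(1) openin_subset unfolding bchart_def by force
  then show ?thesis
    using assms bchart_image[OF assms(1)] by (auto simp: half_space_eq)
qed

lemma bchart_homeomorphic_map_restrict:
  assumes "bchart T X p U V \<phi>" "W \<subseteq> U"
  shows "homeomorphic_map (subtopology X W) (top_of_set (\<phi> ` W)) \<phi>"
proof -
  have "U \<subseteq> topspace X"
    using assms openin_subset unfolding bchart_def by blast
  then have "homeomorphic_map (subtopology (subtopology X U) W) (subtopology (top_of_set V) (\<phi> ` W)) \<phi>"
    using assms bchart_image[OF assms(1)]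
    by (intro homeomorphic_map_subtopologies[where X="subtopology X U"]) (auto simp: bchart_def)
  moreover have "U \<inter> W = W" "V \<inter> \<phi> ` W = \<phi> ` W"
    using assms(2) bchart_image[OF assms(1)] by auto
  ultimately show ?thesis
    by (simp add: subtopology_subtopology)
qed

lemma bchart_openin_image:
  assumes "bchart T X p U V \<phi>" "openin X W" "W \<subseteq> U"
  shows "openin (top_of_set (half_space T)) (\<phi> ` W)"
proof -
  have "openin (subtopology X U) W"
    using assms(2,3) by (auto simp: openin_subtopology intro!: exI[of _ W])
  then have "openin (top_of_set V) (\<phi> ` W)"
    using assms homeomorphic_map_openness[of "subtopology X U" "top_of_set V" \<phi> W]
    by (auto simp: bchart_def dest: openin_subset)
  then show ?thesis
    using assms(1) openin_trans unfolding bchart_def by blast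
qed

lemma bchart_openin_positive_part:
  assumes "bchart T X p U V \<phi>"
  shows "openin X {x \<in> U. 0 < \<phi> x \<bullet> half_space_axis T}"
proof -
  have "continuous_map (subtopology X U) euclidean \<phi>"
    using assms homeomorphic_imp_continuous_map continuous_map_into_fulltopology
    unfolding bchart_def by blast
  then have "openin (subtopology X U) {x \<in> topspace (subtopology X U). \<phi> x \<in> {y. 0 < y \<bullet> half_space_axis T}}"
    using open_halfspace_gt[where a="half_space_axis T" and b=0]
    by (intro openin_continuous_map_preimage) (auto simp: inner_commute)
  moreover have "{x \<in> topspace (subtopology X U). \<phi> x \<in> {y. 0 < y \<bullet> half_space_axis T}}
      = {x \<in> U. 0 < \<phi> x \<bullet> half_space_axis T}"
    using assms openin_subset unfolding bchart_def by auto
  ultimately show ?thesis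
    using assms openin_trans_full unfolding bchart_def by metis
qed

lemma bchart_transition_open:
  fixes \<phi> \<psi> :: "'a \<Rightarrow> 'm::euclidean_space"
  assumes \<phi>: "bchart T X p U V \<phi>" and \<psi>: "bchart T X q U' V' \<psi>"
    and "W \<subseteq> U" "W \<subseteq> U'" "open (\<phi> ` W)"
  shows "open (\<psi> ` W)"
proof -
  obtain g where "homeomorphic_maps (subtopology X W) (top_of_set (\<phi> ` W)) \<phi> g"
    using bchart_homeomorphic_map_restrict[OF \<phi> \<open>W \<subseteq> U\<close>] homeomorphic_map_maps by blast
  then have "homeomorphic_map (top_of_set (\<phi> ` W)) (subtopology X W) g"
    by (simp add: homeomorphic_maps_map)
  then have h: "homeomorphic_map (top_of_set (\<phi> ` W)) (top_of_set (\<psi> ` W)) (\<psi> \<circ> g)"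
    using bchart_homeomorphic_map_restrict[OF \<psi> \<open>W \<subseteq> U'\<close>] homeomorphic_map_compose by blast
  have "continuous_on (\<phi> ` W) (\<psi> \<circ> g)"
    using homeomorphic_imp_continuous_map[OF h] by (simp add: continuous_map_subtopology_eu)
  moreover have "inj_on (\<psi> \<circ> g) (\<phi> ` W)"
    using homeomorphic_imp_injective_map[OF h] by simp
  moreover have "(\<psi> \<circ> g) ` (\<phi> ` W) = \<psi> ` W"
    using homeomorphic_imp_surjective_map[OF h] by simp
  ultimately show ?thesis
    using invariance_of_domain \<open>open (\<phi> ` W)\<close> by metis
qed

lemma bchart_positive_imp_positive:
  fixes \<phi> \<psi> :: "'a \<Rightarrow> 'm::euclidean_space"
  assumes \<phi>: "bchart T X p U V \<phi>" and \<psi>: "bchart T X p U' V' \<psi>"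
    and pos: "0 < \<phi> p \<bullet> half_space_axis T"
  shows "0 < \<psi> p \<bullet> half_space_axis T"
proof -
  define W where "W = {x \<in> U. 0 < \<phi> x \<bullet> half_space_axis T} \<inter> U'"
  have W: "openin X W" "W \<subseteq> U" "W \<subseteq> U'" "p \<in> W"
    using bchart_openin_positive_part[OF \<phi>] \<phi> \<psi> pos by (auto simp: W_def bchart_def)
  have "open (\<phi> ` W)"
    using openin_half_space_open_iff[OF bchart_openin_image[OF \<phi> W(1,2)]] by (auto simp: W_def)
  then have "open (\<psi> ` W)"
    using bchart_transition_open[OF \<phi> \<psi> W(2,3)] by blast
  then show ?thesis
    using openin_half_space_open_iff[OF bchart_openin_image[OF \<psi> W(1,3)]] W(4) by blast
qed

lemma mboundary_iff_bchart:
  assumes "bchart T X p U V (\<phi>::'a \<Rightarrow> 'm::euclidean_space)"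
  shows "p \<in> mboundary T X \<longleftrightarrow> \<phi> p \<bullet> half_space_axis T = 0"
proof
  assume "p \<in> mboundary T X"
  then obtain U' V' and \<psi> :: "'a \<Rightarrow> 'm" where "bchart T X p U' V' \<psi>" "\<psi> p \<bullet> half_space_axis T = 0"
    by (auto simp: mboundary_eq)
  then show "\<phi> p \<bullet> half_space_axis T = 0"
    using bchart_positive_imp_positive[OF assms] bchart_nonneg[OF assms] assms
    by (force simp: bchart_def)
next
  assume "\<phi> p \<bullet> half_space_axis T = 0"
  moreover have "p \<in> topspace X"
    using assms openin_subset unfolding bchart_def by blast
  ultimately show "p \<in> mboundary T X"
    using assms by (auto simp: mboundary_eq)
qed

lemma mboundary_subset_topspace: "mboundary T X \<subseteq> topspace X"
  by (auto simp: mboundary_def)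

lemma closedin_mboundary:
  fixes T :: "'m::euclidean_space itself" and X :: "'a topology"
  assumes "manifold_with_boundary T X"
  shows "closedin X (mboundary T X)"
proof -
  have "\<exists>P. openin X P \<and> q \<in> P \<and> P \<subseteq> topspace X - mboundary T X"
    if q: "q \<in> topspace X - mboundary T X" for q
  proof -
    obtain U V and \<phi> :: "'a \<Rightarrow> 'm" where \<phi>: "bchart T X q U V \<phi>"
      using assms q unfolding manifold_with_boundary_def by blast
    define P where "P = {x \<in> U. 0 < \<phi> x \<bullet> half_space_axis T}"
    have "q \<in> U"
      using \<phi> by (simp add: bchart_def)
    then have "q \<in> P"
      using q bchart_nonneg[OF \<phi>] mboundary_iff_bchart[OF \<phi>] by (simp add: P_def less_le)
    moreover have "P \<subseteq> topspace X - mboundary T X"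
    proof
      fix x assume "x \<in> P"
      then have "x \<in> U" "x \<notin> mboundary T X"
        using mboundary_iff_bchart[OF bchart_at[OF \<phi>]] by (auto simp: P_def)
      then show "x \<in> topspace X - mboundary T X"
        using \<phi> openin_subset by (auto simp: bchart_def)
    qed
    ultimately show ?thesis
      using bchart_openin_positive_part[OF \<phi>] unfolding P_def by blast
  qed
  then have "openin X (topspace X - mboundary T X)"
    by (subst openin_subopen) blast
  then show ?thesis
    by (simp add: closedin_def mboundary_subset_topspace)
qed

lemma continuous_map_prod_tube:
  fixes c :: "'a \<times> real \<Rightarrow> 'b"
  assumes c: "continuous_map (prod_topology Y (top_of_set S)) X c"
    and G: "openin X G" and x: "x \<in> topspace Y" and t: "t \<in> S" and ct: "c (x, t) \<in> G"
  shows "\<exists>N r. openin Y N \<and> x \<in> N \<and> 0 < r \<and> (\<forall>y\<in>N. \<forall>s\<in>S. \<bar>s - t\<bar> < r \<longrightarrow> c (y, s) \<in> G)"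
proof -
  let ?P = "{z \<in> topspace (prod_topology Y (top_of_set S)). c z \<in> G}"
  have "openin (prod_topology Y (top_of_set S)) ?P"
    using openin_continuous_map_preimage[OF c G] .
  moreover have "(x, t) \<in> ?P"
    using x t ct by simp
  ultimately obtain N V where N: "openin Y N" "x \<in> N" "N \<times> V \<subseteq> ?P"
    and V: "openin (top_of_set S) V" "t \<in> V"
    unfolding openin_prod_topology_alt by meson
  obtain r where "0 < r" "\<forall>s\<in>S. dist s t < r \<longrightarrow> s \<in> V"
    using V unfolding openin_euclidean_subtopology_iff by blast
  then show ?thesis
    using N by (intro exI[of _ N] exI[of _ r]) (auto simp: dist_real_def)
qed

lemma continuous_map_prod_tube_at_zero:
  fixes c :: "'a \<times> real \<Rightarrow> 'b"
  assumes c: "continuous_map (prod_topology Y (top_of_set {0..<1})) X c"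
    and G: "openin X G" and x: "x \<in> topspace Y" and cx: "c (x, 0) \<in> G"
  shows "\<exists>N r. openin Y N \<and> x \<in> N \<and> r \<in> {0<..1} \<and> c ` (N \<times> {0..<r}) \<subseteq> G"
proof -
  obtain N r where N: "openin Y N" "x \<in> N" "0 < r"
    and Nr: "\<forall>y\<in>N. \<forall>s\<in>{0..<1}. \<bar>s - 0\<bar> < r \<longrightarrow> c (y, s) \<in> G"
    using continuous_map_prod_tube[OF c G x _ cx] by auto
  have "c ` (N \<times> {0..<min r 1}) \<subseteq> G"
    using Nr by auto
  moreover have "min r 1 \<in> {0<..1}"
    using N(3) by simp
  ultimately show ?thesis
    using N(1,2) by blast
qed

lemma compact_space_uniform_tube:
  fixes c :: "'a \<times> real \<Rightarrow> 'b"
  assumes Y: "compact_space Y"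
    and c: "continuous_map (prod_topology Y (top_of_set {0..<1})) X c"
    and U: "\<forall>a\<in>I. openin X (U a)" and cover: "\<forall>x\<in>topspace Y. \<exists>a\<in>I. c (x, 0) \<in> U a"
  shows "\<exists>e>0. e \<le> 1 \<and> (\<forall>x\<in>topspace Y. \<exists>a\<in>I. \<exists>N. openin Y N \<and> x \<in> N \<and> c ` (N \<times> {0..<e}) \<subseteq> U a)"
proof -
  define \<N> where "\<N> = {N. openin Y N \<and> (\<exists>r\<in>{0<..1}. \<exists>a\<in>I. c ` (N \<times> {0..<r}) \<subseteq> U a)}"
  have "topspace Y \<subseteq> \<Union>\<N>"
  proof
    fix x assume x: "x \<in> topspace Y"
    then obtain a where a: "a \<in> I" "c (x, 0) \<in> U a"
      using cover by blast
    moreover have "openin X (U a)"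
      using U a by blast
    ultimately obtain N r where "openin Y N" "x \<in> N" "r \<in> {0<..1}" "c ` (N \<times> {0..<r}) \<subseteq> U a"
      using continuous_map_prod_tube_at_zero[OF c _ x] by meson
    with a(1) show "x \<in> \<Union>\<N>"
      unfolding \<N>_def by blast
  qed
  moreover have "\<forall>N\<in>\<N>. openin Y N"
    unfolding \<N>_def by blast
  ultimately obtain \<F> where \<F>: "finite \<F>" "\<F> \<subseteq> \<N>" "topspace Y \<subseteq> \<Union>\<F>"
    using Y unfolding compact_space_def compactin_def by blast
  then have "\<forall>N\<in>\<F>. \<exists>r\<in>{0<..1}. \<exists>a\<in>I. c ` (N \<times> {0..<r}) \<subseteq> U a"
    unfolding \<N>_def by blast
  then obtain R A where RA: "\<And>N. N \<in> \<F> \<Longrightarrow> R N \<in> {0<..1} \<and> A N \<in> I \<and> c ` (N \<times> {0..<R N}) \<subseteq> U (A N)"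
    by metis
  define e where "e = Min (insert 1 (R ` \<F>))"
  have e: "0 < e" "e \<le> 1" "\<And>N. N \<in> \<F> \<Longrightarrow> e \<le> R N"
    using \<F>(1) RA by (auto simp: e_def)
  have "\<exists>a\<in>I. \<exists>N. openin Y N \<and> x \<in> N \<and> c ` (N \<times> {0..<e}) \<subseteq> U a" if x: "x \<in> topspace Y" for x
  proof -
    obtain N where N: "N \<in> \<F>" "x \<in> N"
      using \<F>(3) x by blast
    have "openin Y N"
      using N(1) \<F>(2) unfolding \<N>_def by blast
    moreover have "c ` (N \<times> {0..<e}) \<subseteq> c ` (N \<times> {0..<R N})"
      using e(3)[OF N(1)] by (intro image_mono Sigma_mono) auto
    ultimately show ?thesis
      using RA[OF N(1)] N(2) by blast
  qed
  with e show ?thesis by blast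
qed

lemma collar_image_not_supset_open:
  fixes c :: "'a \<times> real \<Rightarrow> 'b"
  assumes c: "continuous_map (prod_topology Y (top_of_set {0..<1})) X c"
    and inj: "inj_on c (topspace Y \<times> {0..<1})"
    and G: "openin X G" "G \<noteq> {}"
  shows "\<exists>e>0. e \<le> 1 \<and> \<not> G \<subseteq> c ` (topspace Y \<times> {0..<e})"
proof -
  obtain p where p: "p \<in> G"
    using G by blast
  show ?thesis
  proof (cases "p \<in> c ` (topspace Y \<times> {0..<1})")
    case False
    with p show ?thesis by (intro exI[of _ 1]) auto
  next
    case True
    then obtain x t where x: "x \<in> topspace Y" and t: "0 \<le> t" "t < 1" and pxt: "p = c (x, t)"
      by auto
    obtain r where r: "0 < r" "\<forall>s\<in>{0..<1}. \<bar>s - t\<bar> < r \<longrightarrow> c (x, s) \<in> G"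
      using continuous_map_prod_tube[OF c G(1) x, of t] t p pxt by auto
    define s where "s = t + min r (1 - t) / 2"
    have s: "t < s" "s < 1" "\<bar>s - t\<bar> < r"
      using r t by (auto simp: s_def min_def field_simps)
    have "c (x, s) \<in> G"
      using r s t by auto
    moreover have "c (x, s) \<notin> c ` (topspace Y \<times> {0..<s})"
    proof
      assume "c (x, s) \<in> c ` (topspace Y \<times> {0..<s})"
      then obtain y u where "y \<in> topspace Y" "0 \<le> u" "u < s" "c (x, s) = c (y, u)"
        by auto
      then show False
        using inj_onD[OF inj] x s t by fastforce
    qed
    ultimately show ?thesis
      using s t by (intro exI[of _ s]) auto
  qed
qed

lemma small_collarI:
  assumes "0 < \<epsilon>" and c0: "\<forall>x\<in>D. c (x, 0) = x" and U: "\<forall>a\<in>I. U a \<subseteq> topspace X"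
    and heights: "\<forall>a\<in>I. \<exists>E\<ge>\<epsilon>. \<not> U a \<subseteq> c ` (D \<times> {0..<E})"
    and tubes: "\<exists>e\<ge>\<epsilon>. \<forall>x\<in>D. \<exists>a\<in>I. \<exists>N. openin (subtopology X D) N \<and> x \<in> N \<and> c ` (N \<times> {0..<e}) \<subseteq> U a"
  shows "small_collar X D c \<epsilon> I U"
proof -
  have shrink: "c ` (N \<times> {0..<\<epsilon>}) \<subseteq> c ` (N \<times> {0..<e})" if "\<epsilon> \<le> e" for N e
    using that by (intro image_mono Sigma_mono) auto
  have "U a \<inter> (topspace X - c ` (D \<times> {0..<\<epsilon>})) \<noteq> {}" if a: "a \<in> I" for a
  proof -
    obtain E where "\<epsilon> \<le> E" "\<not> U a \<subseteq> c ` (D \<times> {0..<E})"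
      using heights a by blast
    then have "\<not> U a \<subseteq> c ` (D \<times> {0..<\<epsilon>})"
      using shrink by (meson order_trans)
    then show ?thesis
      using U a by blast
  qed
  moreover
  define W where "W a = \<Union>{N. openin (subtopology X D) N \<and> c ` (N \<times> {0..<\<epsilon>}) \<subseteq> U a}" for a
  have "openin (subtopology X D) (W a)" "c ` (W a \<times> {0..<\<epsilon>}) \<subseteq> U a" for a
    unfolding W_def by (auto intro!: openin_Union)
  moreover have "(\<Union>a\<in>{a\<in>I. U a \<inter> D \<noteq> {}}. W a) = D"
  proof
    show "(\<Union>a\<in>{a\<in>I. U a \<inter> D \<noteq> {}}. W a) \<subseteq> D"
      unfolding W_def using openin_subset by fastforce
  next
    obtain e where e: "\<epsilon> \<le> e"
      and tubes_e: "\<forall>x\<in>D. \<exists>a\<in>I. \<exists>N. openin (subtopology X D) N \<and> x \<in> N \<and> c ` (N \<times> {0..<e}) \<subseteq> U a"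
      using tubes by blast
    show "D \<subseteq> (\<Union>a\<in>{a\<in>I. U a \<inter> D \<noteq> {}}. W a)"
    proof
      fix x assume x: "x \<in> D"
      then obtain a N where aN: "a \<in> I" "openin (subtopology X D) N" "x \<in> N"
        and NUe: "c ` (N \<times> {0..<e}) \<subseteq> U a"
        using tubes_e by blast
      have NU: "c ` (N \<times> {0..<\<epsilon>}) \<subseteq> U a"
        using shrink[OF e, of N] NUe by (rule order_trans)
      then have "x \<in> W a"
        unfolding W_def using aN(2,3) by blast
      moreover have "c (x, 0) \<in> c ` (N \<times> {0..<\<epsilon>})"
        using aN(3) \<open>0 < \<epsilon>\<close> by auto
      then have "x \<in> U a"
        using NU c0 x by auto
      ultimately show "x \<in> (\<Union>a\<in>{a\<in>I. U a \<inter> D \<noteq> {}}. W a)"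
        using aN(1) x by blast
    qed
  qed
  ultimately show ?thesis
    unfolding small_collar_def by (intro conjI ballI exI[of _ W]) auto
qed

lemma open_collar_continuous_map:
  "open_collar X D c \<Longrightarrow> continuous_map (prod_topology (subtopology X D) (top_of_set {0..<1})) X c"
  unfolding open_collar_def
  using homeomorphic_imp_continuous_map continuous_map_into_fulltopology by blast

lemma open_collar_inj_on:
  "open_collar X D c \<Longrightarrow> inj_on c (topspace (subtopology X D) \<times> {0..<1})"
  unfolding open_collar_def using homeomorphic_imp_injective_map by fastforce

theorem mainTheorem10:
  fixes X :: "'a topology" and c :: "'a \<times> real \<Rightarrow> 'a"
    and I :: "'i set" and U :: "'i \<Rightarrow> 'a set"
  assumes "manifold_with_boundary TYPE('m::euclidean_space) X"
    and "compact_space X"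
    and "mboundary TYPE('m) X \<noteq> {}"
    and "open_collar X (mboundary TYPE('m) X) c"
    and "finite I"
    and "\<forall>a\<in>I. openin X (U a) \<and> U a \<noteq> {}"
    and "(\<Union>a\<in>I. U a) = topspace X"
  shows "\<exists>\<epsilon>. 0 < \<epsilon> \<and> \<epsilon> \<le> 1 \<and> small_collar X (mboundary TYPE('m) X) c \<epsilon> I U"
proof -
  let ?D = "mboundary TYPE('m) X"
  have D: "topspace (subtopology X ?D) = ?D"
    using mboundary_subset_topspace[of "TYPE('m)" X] by auto
  have compact: "compact_space (subtopology X ?D)"
    using assms(1,2) by (simp add: closedin_mboundary closedin_compact_space compact_space_subtopology)
  note c = open_collar_continuous_map[OF assms(4)] and inj = open_collar_inj_on[OF assms(4)]
  have c0: "\<forall>x\<in>?D. c (x, 0) = x"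
    using assms(4) by (simp add: open_collar_def)
  have U: "\<forall>a\<in>I. openin X (U a)"
    using assms(6) by blast
  have "\<forall>x\<in>?D. \<exists>a\<in>I. c (x, 0) \<in> U a"
    using c0 assms(7) mboundary_subset_topspace[of "TYPE('m)" X] by auto
  then obtain e where e: "0 < e" "e \<le> 1"
    and tubes: "\<forall>x\<in>?D. \<exists>a\<in>I. \<exists>N. openin (subtopology X ?D) N \<and> x \<in> N \<and> c ` (N \<times> {0..<e}) \<subseteq> U a"
    using compact_space_uniform_tube[OF compact c U, unfolded D] by blast
  have "\<exists>E>0. \<not> U a \<subseteq> c ` (?D \<times> {0..<E})" if "a \<in> I" for a
    using collar_image_not_supset_open[OF c inj, of "U a"] assms(6) that unfolding D by auto
  then obtain E where E: "\<And>a. a \<in> I \<Longrightarrow> 0 < E a \<and> \<not> U a \<subseteq> c ` (?D \<times> {0..<E a})"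
    by metis
  define \<epsilon> where "\<epsilon> = Min (insert e (E ` I))"
  have \<epsilon>: "0 < \<epsilon>" "\<epsilon> \<le> e" "\<And>a. a \<in> I \<Longrightarrow> \<epsilon> \<le> E a"
    using assms(5) e E by (auto simp: \<epsilon>_def)
  have "small_collar X ?D c \<epsilon> I U"
    using \<epsilon> E tubes U openin_subset by (intro small_collarI[OF \<epsilon>(1) c0]) blast+
  then show ?thesis
    using \<epsilon>(1,2) e(2) by force
qed

end
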